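(* Let $p\ge 0$, let $(\kappa_i)_{i\ge1}$ be a sequence with $C^{-1}i^{-p}\le \kappa_i\le C i^{-p}$ for all $i$ and some $C\ge 1$, let $\mu_0=(\mu_{0,i})_{i\ge1}\in\ell_2$, and for $n\ge 2$ define $h_n:(0,\infty)\to[0,\infty)$ by \[ h_n(\alpha)=\frac{1+2\alpha+2p}{n^{1/(1+2\alpha+2p)}\log n}\sum_{i=1}^{\infty}\frac{n^2 i^{1+2\alpha}\mu_{0,i}^2\log i}{(i^{1+2\alpha}\kappa_i^{-2}+n)^2}. \] For constants $0<l<L$ put \[ \underline{\alpha}_n=\inf\{\alpha>0: h_n(\alpha)>l\}\wedge\sqrt{\log n},\qquad \overline{\alpha}_n=\inf\{\alpha>0: h_n(\alpha)>L(\log n)^2\}. \] Then for any $l,L>0$ the following hold. (i) For all $\beta,R>0$ there exists $c_0>0$ such that $\inf_{\|\mu_0\|_\beta\le R}\underline{\alpha}_n\ge \beta-\frac{c_0}{\log n}$ for all $n$ large enough. (ii) For all $\gamma,R>0$, $\inf_{\|\mu_0\|_{A^\gamma}\le R}\underline{\alpha}_n\ge \frac{\sqrt{\log n}}{\log\log n}$ for all $n$ large enough. (iii) If $\mu_{0,i}\ge c\, i^{-\gamma-1/2}$ for all $i$, for some $c,\gamma>0$, then for a constant $C_0>0$ depending only on $c$ and $\gamma$ we have $\overline{\alpha}_n\le \gamma+C_0\frac{\log\log n}{\log n}$ for all $n$ large enough. (iv) If $\mu_{0,i}\ne 0$ for some $i\ge 2$, then $\overline{\alpha}_n\le \frac{\log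 n}{2\log 2}-\frac12-p$ for all $n$ large enough.
   Context: For $\mu\in\ell_2$ and $\beta,\gamma\ge0$: the Sobolev norm is $\|\mu\|_\beta^2=\sum_{i\ge1} i^{2\beta}\mu_i^2$ and the analytic norm is $\|\mu\|_{A^\gamma}^2=\sum_{i\ge1}e^{2\gamma i}\mu_i^2$. $a\wedge b=\min(a,b)$. The infimum of the empty set is $+\infty$. *)

theory Defs
  imports "HOL-Analysis.Analysis" "HOL-Library.Extended_Real"
begin

text \<open>Sequences are indexed from 1: a sequence is a function nat => real whose
  value at 0 is ignored. Sums over i >= 1 are written as sums over Suc i.\<close>

definition in_l2 :: "(nat \<Rightarrow> real) \<Rightarrow> bool" where
  "in_l2 \<mu> \<longleftrightarrow> summable (\<lambda>i. (\<mu> (Suc i))\<^sup>2)"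

definition sobolev_finite :: "real \<Rightarrow> (nat \<Rightarrow> real) \<Rightarrow> bool" where
  "sobolev_finite \<beta> \<mu> \<longleftrightarrow> summable (\<lambda>i. real (Suc i) powr (2*\<beta>) * (\<mu> (Suc i))\<^sup>2)"

definition sobolev_norm :: "real \<Rightarrow> (nat \<Rightarrow> real) \<Rightarrow> real" where
  "sobolev_norm \<beta> \<mu> = sqrt (\<Sum>i. real (Suc i) powr (2*\<beta>) * (\<mu> (Suc i))\<^sup>2)"

definition analytic_finite :: "real \<Rightarrow> (nat \<Rightarrow> real) \<Rightarrow> bool" where
  "analytic_finite \<gamma> \<mu> \<longleftrightarrow> summable (\<lambda>i. exp (2*\<gamma>*real (Suc i)) * (\<mu> (Suc i))\<^sup>2)"

definition analytic_norm :: "real \<Rightarrow> (nat \<Rightarrow> real) \<Rightarrow> real" where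
  "analytic_norm \<gamma> \<mu> = sqrt (\<Sum>i. exp (2*\<gamma>*real (Suc i)) * (\<mu> (Suc i))\<^sup>2)"

definition hfun :: "real \<Rightarrow> (nat \<Rightarrow> real) \<Rightarrow> (nat \<Rightarrow> real) \<Rightarrow> nat \<Rightarrow> real \<Rightarrow> real" where
  "hfun p \<kappa> \<mu> n \<alpha> =
     (1 + 2*\<alpha> + 2*p) / (real n powr (1 / (1 + 2*\<alpha> + 2*p)) * ln (real n)) *
     (\<Sum>i. (real n)\<^sup>2 * real (Suc i) powr (1 + 2*\<alpha>) * (\<mu> (Suc i))\<^sup>2 * ln (real (Suc i))
           / (real (Suc i) powr (1 + 2*\<alpha>) / (\<kappa> (Suc i))\<^sup>2 + real n)\<^sup>2)"

text \<open>Lower and upper alphas, as extended reals (inf of the empty set is +infinity).\<close>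
definition alpha_lower :: "real \<Rightarrow> (nat \<Rightarrow> real) \<Rightarrow> real \<Rightarrow> (nat \<Rightarrow> real) \<Rightarrow> nat \<Rightarrow> ereal" where
  "alpha_lower p \<kappa> l \<mu> n =
     min (Inf {ereal \<alpha> | \<alpha>. \<alpha> > 0 \<and> hfun p \<kappa> \<mu> n \<alpha> > l}) (ereal (sqrt (ln (real n))))"

definition alpha_upper :: "real \<Rightarrow> (nat \<Rightarrow> real) \<Rightarrow> real \<Rightarrow> (nat \<Rightarrow> real) \<Rightarrow> nat \<Rightarrow> ereal" where
  "alpha_upper p \<kappa> L \<mu> n =
     Inf {ereal \<alpha> | \<alpha>. \<alpha> > 0 \<and> hfun p \<kappa> \<mu> n \<alpha> > L * (ln (real n))\<^sup>2}"

end

theory Submission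
  imports Defs "HOL-Real_Asymp.Real_Asymp"
begin

text \<open>
  Up to a factor \<open>C\<^sup>4\<close> in either direction, the \<open>i\<close>-th summand of \<open>h\<^sub>n(\<alpha>)\<close> is \<open>\<mu>\<^sub>0\<^sub>,\<^sub>i\<^sup>2\<close> times
  the weight \<open>n\<^sup>2 i\<^sup>1\<^sup>+\<^sup>2\<^sup>\<alpha> log i / (i\<^sup>1\<^sup>+\<^sup>2\<^sup>\<alpha>\<^sup>+\<^sup>2\<^sup>p + n)\<^sup>2\<close>, which is concentrated around the index
  \<open>N = n\<^sup>1\<^sup>/\<^sup>(\<^sup>1\<^sup>+\<^sup>2\<^sup>\<alpha>\<^sup>+\<^sup>2\<^sup>p\<^sup>)\<close> where the two terms of its denominator balance.

  For the lower bounds (i) and (ii) the weights are dominated by \<open>i\<^sup>2\<^sup>\<beta>\<close> resp. \<open>e\<^sup>2\<^sup>\<gamma>\<^sup>i\<close> times a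
  factor which, multiplied by the prefactor of \<open>h\<^sub>n\<close>, tends to zero as long as \<open>\<alpha>\<close> stays below
  \<open>\<beta> - c\<^sub>0/log n\<close> resp. below \<open>\<surd>log n / log log n\<close>; so \<open>h\<^sub>n(\<alpha>) \<le> l\<close> for all those \<open>\<alpha>\<close>.
  For the upper bounds (iii) and (iv) it suffices to exhibit one \<open>\<alpha>\<close> at which \<open>h\<^sub>n\<close> is already
  large: in (iii) the indices between \<open>N\<close> and \<open>4N\<close> contribute about \<open>N\<^sup>2\<^sup>\<alpha>\<^sup>-\<^sup>2\<^sup>\<gamma>\<close>, which exceeds
  \<open>(log n)\<^sup>4\<close> once \<open>\<alpha> = \<gamma> + C\<^sub>0 log log n / log n\<close>; in (iv) the \<open>\<alpha>\<close> with \<open>i\<^sup>1\<^sup>+\<^sup>2\<^sup>\<alpha>\<^sup>+\<^sup>2\<^sup>p = n\<close> for a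
  single nonzero coefficient \<open>\<mu>\<^sub>0\<^sub>,\<^sub>i\<close> makes \<open>h\<^sub>n(\<alpha>)\<close> of order \<open>n\<close>.
\<close>

section \<open>Elementary inequalities\<close>

lemma divide_square_bounds:
  fixes X D E c :: real
  assumes "X \<ge> 0" "D > 0" "c \<ge> 1" "D / c \<le> E" "E \<le> c * D"
  shows "X / D\<^sup>2 / c\<^sup>2 \<le> X / E\<^sup>2" and "X / E\<^sup>2 \<le> c\<^sup>2 * (X / D\<^sup>2)"
proof -
  have "D / c > 0" using assms by simp
  then have E: "E > 0" using assms by linarith
  have "X / (c * D)\<^sup>2 \<le> X / E\<^sup>2"
    using assms E by (intro divide_left_mono power_mono mult_pos_pos) auto
  then show "X / D\<^sup>2 / c\<^sup>2 \<le> X / E\<^sup>2" by (simp add: power_mult_distrib mult.commute)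
  have "X / E\<^sup>2 \<le> X / (D / c)\<^sup>2"
    using assms \<open>D / c > 0\<close> E by (intro divide_left_mono power_mono mult_pos_pos) auto
  then show "X / E\<^sup>2 \<le> c\<^sup>2 * (X / D\<^sup>2)" by (simp add: power_divide ac_simps)
qed

lemma powr_divide_square_bounds:
  fixes j C p s k :: real
  assumes j: "j \<ge> 1" and C: "C \<ge> 1" and k: "j powr (-p) / C \<le> k" "k \<le> C * j powr (-p)"
  shows "j powr (s + 2*p) / C\<^sup>2 \<le> j powr s / k\<^sup>2" and "j powr s / k\<^sup>2 \<le> C\<^sup>2 * j powr (s + 2*p)"
proof -
  have pos: "j powr (-p) / C > 0" using C j by simp
  have sq: "(j powr (-p))\<^sup>2 = 1 / j powr (2*p)"
    using j by (simp add: powr_minus_divide power_one_over powr_power)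
  have kpos: "k > 0" using pos k by linarith
  have "j powr (s + 2*p) / C\<^sup>2 = j powr s / (C * j powr (-p))\<^sup>2"
    by (simp add: power_mult_distrib sq powr_add)
  also have "\<dots> \<le> j powr s / k\<^sup>2"
    using kpos k C j by (intro divide_left_mono power_mono mult_pos_pos zero_less_power) auto
  finally show "j powr (s + 2*p) / C\<^sup>2 \<le> j powr s / k\<^sup>2" .
  have "j powr s / k\<^sup>2 \<le> j powr s / (j powr (-p) / C)\<^sup>2"
    using pos kpos k by (intro divide_left_mono power_mono mult_pos_pos zero_less_power) auto
  also have "\<dots> = C\<^sup>2 * j powr (s + 2*p)"
    by (simp add: power_divide sq powr_add)
  finally show "j powr s / k\<^sup>2 \<le> C\<^sup>2 * j powr (s + 2*p)" .
qed

lemma powr_le_exp: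
  fixes x s c :: real
  assumes x: "x > 0" and s: "s > 0" and c: "c > 0"
  shows "x powr s \<le> (s/c) powr s * exp (c*x)"
proof -
  have "s * ln (c*x/s) \<le> s * (c*x/s - 1)" using x s c by (intro mult_left_mono ln_le_minus_one) auto
  also have "\<dots> \<le> c*x" using s by (simp add: algebra_simps)
  finally have "s * ln x \<le> s * ln (s/c) + c*x"
    using x s c by (simp add: ln_div ln_mult algebra_simps)
  then have "exp (s * ln x) \<le> exp (s * ln (s/c) + c*x)" by simp
  then show ?thesis using x s c by (simp add: powr_def exp_add)
qed

lemma powr_le_powr_add_one:
  fixes j N b :: real
  assumes "1 \<le> j" "j \<le> N"
  shows "j powr b \<le> N powr b + 1"
proof (cases "b \<ge> 0")
  case True
  then show ?thesis using assms powr_mono2[of b j N] by simp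
next
  case False
  then show ?thesis using assms powr_mono[of b 0 j] by (simp add: add_increasing)
qed

lemma powr_mult_log_le:
  fixes t e L :: real
  assumes t: "t \<ge> 1" and e: "e \<le> -1" and L: "L \<ge> 0"
  shows "t powr e * (L + ln t) \<le> L + 1"
proof -
  have "t powr e \<le> t powr (-1)" using t e by (intro powr_mono) auto
  then have "t powr e * ln t \<le> t powr (-1) * ln t" using t by (intro mult_right_mono) auto
  also have "\<dots> = ln t / t" using t by (simp add: powr_minus divide_inverse)
  also have "\<dots> \<le> 1" using t ln_bound[of t] by simp
  finally have "t powr e * ln t \<le> 1" .
  moreover have "t powr e \<le> t powr 0" using t e by (intro powr_mono) auto
  then have "t powr e * L \<le> L" using t L by (simp add: mult_left_le_one_le)
  ultimately show ?thesis by (simp add: distrib_left)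
qed

lemma suminf_le_weighted_norm:
  fixes f w :: "nat \<Rightarrow> real"
  assumes "summable w" and "\<And>i. 0 \<le> f i" and "\<And>i. f i \<le> M * w i" and "M \<ge> 0"
    and "sqrt (suminf w) \<le> R"
  shows "suminf f \<le> M * R\<^sup>2"
proof -
  have Mw: "summable (\<lambda>i. M * w i)" using assms(1) by (rule summable_mult)
  then have "summable f" by (rule summable_comparison_test') (use assms(2,3) in auto)
  then have "suminf f \<le> (\<Sum>i. M * w i)" using Mw assms(3) by (intro suminf_le) auto
  also have "\<dots> = M * suminf w" using assms(1) by (rule suminf_mult)
  also have "\<dots> \<le> M * R\<^sup>2" using assms(4) sqrt_le_D[OF assms(5)] by (rule mult_left_mono[rotated])
  finally show ?thesis .
qed

section \<open>The summands of \<open>h\<^sub>n\<close> and their weights\<close>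

definition hfun_scale :: "real \<Rightarrow> nat \<Rightarrow> real \<Rightarrow> real" where
  "hfun_scale p n \<alpha> = (1 + 2*\<alpha> + 2*p) / (real n powr (1 / (1 + 2*\<alpha> + 2*p)) * ln (real n))"

definition hfun_term :: "(nat \<Rightarrow> real) \<Rightarrow> (nat \<Rightarrow> real) \<Rightarrow> nat \<Rightarrow> real \<Rightarrow> nat \<Rightarrow> real" where
  "hfun_term \<kappa> \<mu> n \<alpha> i = (real n)\<^sup>2 * real (Suc i) powr (1 + 2*\<alpha>) * (\<mu> (Suc i))\<^sup>2 * ln (real (Suc i))
     / (real (Suc i) powr (1 + 2*\<alpha>) / (\<kappa> (Suc i))\<^sup>2 + real n)\<^sup>2"

text \<open>The summand of \<open>h\<^sub>n(\<alpha>)\<close> for \<open>\<kappa>\<^sub>i = i\<^sup>-\<^sup>p\<close> and \<open>\<mu>\<^sub>0\<^sub>,\<^sub>i = 1\<close>, as a function of a real index.\<close>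

definition weight :: "real \<Rightarrow> real \<Rightarrow> real \<Rightarrow> real \<Rightarrow> real" where
  "weight p n \<alpha> j = n\<^sup>2 * j powr (1 + 2*\<alpha>) * ln j / (j powr (1 + 2*\<alpha> + 2*p) + n)\<^sup>2"

lemma hfun_eq: "hfun p \<kappa> \<mu> n \<alpha> = hfun_scale p n \<alpha> * (\<Sum>i. hfun_term \<kappa> \<mu> n \<alpha> i)"
  unfolding hfun_def hfun_scale_def hfun_term_def ..

lemma hfun_term_nonneg: "hfun_term \<kappa> \<mu> n \<alpha> i \<ge> 0"
  unfolding hfun_term_def by simp

lemma hfun_scale_nonneg: "\<alpha> > 0 \<Longrightarrow> p \<ge> 0 \<Longrightarrow> n \<ge> 1 \<Longrightarrow> hfun_scale p n \<alpha> \<ge> 0"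
  unfolding hfun_scale_def by simp

lemma hfun_scale_mono:
  fixes n :: nat
  assumes n: "n \<ge> 2" and \<alpha>: "0 < \<alpha>" "\<alpha> \<le> A" and p: "p \<ge> 0"
  shows "hfun_scale p n \<alpha> \<le> hfun_scale p n A"
proof -
  have a: "0 < 1 + 2*\<alpha> + 2*p" "1 + 2*\<alpha> + 2*p \<le> 1 + 2*A + 2*p" using \<alpha> p by auto
  have "real n powr (1 / (1 + 2*A + 2*p)) \<le> real n powr (1 / (1 + 2*\<alpha> + 2*p))"
    using n a by (intro powr_mono frac_le) auto
  then show ?thesis
    unfolding hfun_scale_def using n a by (intro frac_le mult_right_mono) auto
qed

lemma weight_le_square:
  fixes j n \<alpha> p :: real
  assumes j: "j \<ge> 1" and n: "n \<ge> 0" and \<alpha>: "\<alpha> > 0" and p: "p \<ge> 0"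
  shows "weight p n \<alpha> j \<le> n\<^sup>2"
proof -
  have "j powr (1+2*\<alpha>) * ln j \<le> j powr (1+2*\<alpha>) * j" using j ln_bound[of j] by (intro mult_left_mono) auto
  also have "\<dots> = j powr (2+2*\<alpha>)" using j by (simp add: powr_add power2_eq_square)
  also have "\<dots> \<le> j powr (2*(1+2*\<alpha>+2*p))" using j \<alpha> p by (intro powr_mono) auto
  also have "\<dots> = (j powr (1+2*\<alpha>+2*p))\<^sup>2" by (simp add: power2_eq_square algebra_simps flip: powr_add)
  also have "\<dots> \<le> (j powr (1+2*\<alpha>+2*p) + n)\<^sup>2" using n by (intro power_mono) auto
  finally have "j powr (1+2*\<alpha>) * ln j \<le> (j powr (1+2*\<alpha>+2*p) + n)\<^sup>2" .
  moreover have "0 < j powr (1+2*\<alpha>+2*p) + n" using j n by (simp add: add_pos_nonneg)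
  ultimately have "j powr (1+2*\<alpha>) * ln j / (j powr (1+2*\<alpha>+2*p) + n)\<^sup>2 \<le> 1" by simp
  then have "n\<^sup>2 * (j powr (1+2*\<alpha>) * ln j / (j powr (1+2*\<alpha>+2*p) + n)\<^sup>2) \<le> n\<^sup>2"
    by (intro mult_left_le) auto
  then show ?thesis unfolding weight_def by (simp add: mult.assoc)
qed

lemma weight_le_sobolev:
  fixes j n \<alpha> \<beta> p :: real
  assumes j: "j \<ge> 1" and n: "n \<ge> 1" and \<alpha>: "\<alpha> > 0" and \<beta>: "\<beta> > 0" and p: "p \<ge> 0"
  defines "a \<equiv> 1 + 2*\<alpha> + 2*p" and "b \<equiv> 1 + 2*\<alpha> - 2*\<beta>"
  defines "N \<equiv> n powr (1/a)"
  shows "weight p n \<alpha> j \<le> j powr (2*\<beta>) * ((N powr b + 1) * (ln N + 1))"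
proof -
  have a0: "a > 0" unfolding a_def using \<alpha> p by simp
  have N1: "N \<ge> 1" unfolding N_def using n a0 by (simp add: ge_one_powr_ge_zero)
  have nN: "n = N powr a" unfolding N_def using n a0 by (simp add: powr_powr)
  have jb: "j powr (1 + 2*\<alpha>) = j powr (2*\<beta>) * j powr b" unfolding b_def by (simp flip: powr_add)
  have weight: "weight p n \<alpha> j = j powr (2*\<beta>) * (j powr b * ln j * (n\<^sup>2 / (j powr a + n)\<^sup>2))"
    unfolding weight_def a_def[symmetric] jb by simp
  have den: "0 < j powr a + n" using n by (intro add_nonneg_pos) auto
  show ?thesis
  proof (cases "j \<le> N")
    case True
    have "j powr b \<le> N powr b + 1" using j \<open>j \<le> N\<close> by (rule powr_le_powr_add_one)
    moreover have "ln j \<le> ln N" using \<open>j \<le> N\<close> j by (subst ln_le_cancel_iff) auto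
    then have "ln j \<le> ln N + 1" by linarith
    moreover have "n\<^sup>2 / (j powr a + n)\<^sup>2 \<le> 1"
      using n den by (subst divide_le_eq_1_pos) (auto intro: power_mono)
    ultimately have "j powr b * ln j * (n\<^sup>2 / (j powr a + n)\<^sup>2) \<le> (N powr b + 1) * (ln N + 1) * 1"
      using j N1 by (intro mult_mono) auto
    then show ?thesis unfolding weight by (intro mult_left_mono) auto
  next
    case False
    define t where "t = j / N"
    have t1: "t \<ge> 1" and jt: "j = N * t" unfolding t_def using False N1 by auto
    have "n\<^sup>2 / (j powr a + n)\<^sup>2 \<le> n\<^sup>2 / (j powr a)\<^sup>2"
      using n j den by (intro divide_left_mono power_mono mult_pos_pos) auto
    also have "\<dots> = 1 / (t powr a)\<^sup>2"
      unfolding nN jt using N1 t1 by (simp add: powr_mult power_mult_distrib)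
    finally have "j powr b * ln j * (n\<^sup>2 / (j powr a + n)\<^sup>2) \<le> j powr b * ln j * (1 / (t powr a)\<^sup>2)"
      using j by (intro mult_left_mono) auto
    also have "\<dots> = N powr b * (t powr (b - 2*a) * (ln N + ln t))"
      unfolding jt using N1 t1 by (simp add: powr_mult ln_mult powr_diff powr_power)
    also have "\<dots> \<le> N powr b * (ln N + 1)"
      using t1 N1 \<alpha> \<beta> p unfolding a_def b_def by (intro mult_left_mono powr_mult_log_le) auto
    also have "\<dots> \<le> (N powr b + 1) * (ln N + 1)" using N1 by (simp add: distrib_right)
    finally show ?thesis unfolding weight by (intro mult_left_mono) auto
  qed
qed

lemma hfun_scale_times_sobolev_factor:
  fixes n :: nat
  assumes n: "n \<ge> 2" and \<alpha>: "\<alpha> > 0" and p: "p \<ge> 0"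
  defines "a \<equiv> 1 + 2*\<alpha> + 2*p" and "x \<equiv> ln (real n)"
  defines "N \<equiv> real n powr (1/a)"
  shows "hfun_scale p n \<alpha> * ((N powr (1 + 2*\<alpha> - 2*\<beta>) + 1) * (ln N + 1))
    = (x + a) / x * (exp ((2*\<alpha> - 2*\<beta>) * x / a) + exp (- x / a))"
proof -
  have a0: "a > 0" unfolding a_def using \<alpha> p by simp
  have x0: "x > 0" unfolding x_def using n by simp
  have NE: "N = exp (x / a)" unfolding N_def x_def using n by (simp add: powr_def)
  have "N powr (1 + 2*\<alpha> - 2*\<beta>) / N = exp ((1 + 2*\<alpha> - 2*\<beta>) * (x / a) - x / a)"
    unfolding NE by (simp add: powr_def exp_diff)
  also have "(1 + 2*\<alpha> - 2*\<beta>) * (x / a) - x / a = (2*\<alpha> - 2*\<beta>) * x / a"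
    using a0 by (simp add: field_simps)
  finally have "N powr (1 + 2*\<alpha> - 2*\<beta>) / N = exp ((2*\<alpha> - 2*\<beta>) * x / a)" .
  moreover have "1 / N = exp (- x / a)" unfolding NE by (simp add: exp_minus field_simps)
  moreover have "a * (ln N + 1) = x + a" unfolding NE using a0 by (simp add: field_simps)
  moreover have "hfun_scale p n \<alpha> * ((N powr (1 + 2*\<alpha> - 2*\<beta>) + 1) * (ln N + 1))
      = a * (ln N + 1) / x * (N powr (1 + 2*\<alpha> - 2*\<beta>) / N + 1 / N)"
    unfolding hfun_scale_def a_def[symmetric] N_def[symmetric] x_def[symmetric] using x0 NE
    by (simp add: field_simps)
  ultimately show ?thesis by simp
qed

lemma hfun_scale_times_sobolev_factor_le:
  fixes n :: nat
  assumes n: "n \<ge> 2" and \<alpha>: "\<alpha> > 0" and p: "p \<ge> 0" and c0: "c0 > 0"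
    and \<alpha>_le: "\<alpha> \<le> \<beta> - c0 / ln (real n)" and n_large: "ln (real n) \<ge> 1 + 2*\<beta> + 2*p"
  defines "N \<equiv> real n powr (1 / (1 + 2*\<alpha> + 2*p))" and "a\<^sub>\<beta> \<equiv> 1 + 2*\<beta> + 2*p"
  shows "hfun_scale p n \<alpha> * ((N powr (1 + 2*\<alpha> - 2*\<beta>) + 1) * (ln N + 1))
    \<le> 2 * (exp (-2*c0 / a\<^sub>\<beta>) + exp (- ln (real n) / a\<^sub>\<beta>))"
proof -
  define a x where "a = 1 + 2*\<alpha> + 2*p" and "x = ln (real n)"
  have a0: "a > 0" unfolding a_def using \<alpha> p by simp
  have x0: "x > 0" unfolding x_def using n by simp
  have "c0 / x > 0" using c0 x0 by simp
  then have a_le: "a \<le> a\<^sub>\<beta>" unfolding a_def a\<^sub>\<beta>_def using \<alpha>_le x_def by simp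
  have "(x + a) / x \<le> 2" using a_le n_large x0 unfolding a\<^sub>\<beta>_def x_def by (simp add: divide_le_eq)
  have "c0 / x \<le> \<beta> - \<alpha>" using \<alpha>_le unfolding x_def by simp
  then have "c0 \<le> (\<beta> - \<alpha>) * x" using x0 by (simp add: pos_divide_le_eq)
  then have "(2*\<alpha> - 2*\<beta>) * x \<le> -2*c0" by (simp add: algebra_simps)
  then have "(2*\<alpha> - 2*\<beta>) * x / a \<le> -2*c0 / a" using a0 by (intro divide_right_mono) auto
  also have "\<dots> \<le> -2*c0 / a\<^sub>\<beta>" using a0 a_le c0 by (simp add: frac_le)
  finally have "exp ((2*\<alpha> - 2*\<beta>) * x / a) \<le> exp (-2*c0 / a\<^sub>\<beta>)" by simp
  moreover have "exp (- x / a) \<le> exp (- x / a\<^sub>\<beta>)" using a0 a_le x0 by (simp add: frac_le)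
  ultimately have "(x + a) / x * (exp ((2*\<alpha> - 2*\<beta>) * x / a) + exp (- x / a))
      \<le> 2 * (exp (-2*c0 / a\<^sub>\<beta>) + exp (- x / a\<^sub>\<beta>))"
    using \<open>(x + a) / x \<le> 2\<close> x0 a0 by (intro mult_mono add_mono) auto
  then show ?thesis
    using hfun_scale_times_sobolev_factor[OF n \<alpha> p, of \<beta>] unfolding N_def a_def x_def by simp
qed

lemma weight_le_analytic:
  fixes j n \<alpha> \<gamma> p :: real
  assumes j: "j \<ge> 1" and n: "n \<ge> 0" and \<alpha>: "\<alpha> > 0" and \<gamma>: "\<gamma> > 0"
  shows "weight p n \<alpha> j \<le> ((2+2*\<alpha>) * (1 + 1/(2*\<gamma>))) powr (2+2*\<alpha>) * exp (2*\<gamma>*j)"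
proof -
  have "n\<^sup>2 \<le> (j powr (1+2*\<alpha>+2*p) + n)\<^sup>2" using n by (intro power_mono) auto
  then have q: "n\<^sup>2 / (j powr (1+2*\<alpha>+2*p) + n)\<^sup>2 \<le> 1" using j by (simp add: divide_le_eq_1)
  have "weight p n \<alpha> j = (j powr (1+2*\<alpha>) * ln j) * (n\<^sup>2 / (j powr (1+2*\<alpha>+2*p) + n)\<^sup>2)"
    unfolding weight_def by simp
  also have "\<dots> \<le> j powr (1+2*\<alpha>) * ln j" using q j by (intro mult_left_le) auto
  also have "\<dots> \<le> j powr (1+2*\<alpha>) * j" using j ln_bound[of j] by (intro mult_left_mono) auto
  also have "\<dots> = j powr (2+2*\<alpha>)" using j by (simp add: powr_add power2_eq_square)
  also have "\<dots> \<le> ((2+2*\<alpha>)/(2*\<gamma>)) powr (2+2*\<alpha>) * exp (2*\<gamma>*j)" using j \<alpha> \<gamma> by (intro powr_le_exp) auto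
  also have "\<dots> \<le> ((2+2*\<alpha>) * (1 + 1/(2*\<gamma>))) powr (2+2*\<alpha>) * exp (2*\<gamma>*j)"
    using \<alpha> \<gamma> by (intro mult_right_mono powr_mono2) (auto simp: field_simps)
  finally show ?thesis .
qed

lemma weight_ge_window:
  fixes N j n \<alpha> p a\<^sub>1 :: real
  assumes N: "N \<ge> 1" "N \<le> j" "j \<le> 4*N" and n: "N powr (1 + 2*\<alpha> + 2*p) = n"
    and a\<^sub>1: "1 + 2*\<alpha> + 2*p \<le> a\<^sub>1" and \<alpha>: "\<alpha> > 0" and p: "p \<ge> 0"
  shows "j powr (1 + 2*\<alpha>) * ln N / (4 powr a\<^sub>1 + 1)\<^sup>2 \<le> weight p n \<alpha> j"
proof -
  define a Q where "a = 1 + 2*\<alpha> + 2*p" and "Q = 4 powr a\<^sub>1 + 1"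
  have a0: "a > 0" unfolding a_def using \<alpha> p by simp
  have n0: "n > 0" using n N by auto
  have "j powr a \<le> (4*N) powr a" using N a0 by (intro powr_mono2) auto
  also have "\<dots> = 4 powr a * n" using N n unfolding a_def by (simp add: powr_mult)
  also have "\<dots> \<le> 4 powr a\<^sub>1 * n" using a\<^sub>1 n0 unfolding a_def by (intro mult_right_mono powr_mono) auto
  finally have "j powr a + n \<le> Q * n" unfolding Q_def by (simp add: algebra_simps)
  then have den: "(j powr a + n)\<^sup>2 \<le> (Q * n)\<^sup>2" using n0 by (intro power_mono) auto
  have num: "0 \<le> n\<^sup>2 * j powr (1 + 2*\<alpha>) * ln N" using N by simp
  have "j powr (1 + 2*\<alpha>) * ln N / Q\<^sup>2 = n\<^sup>2 * j powr (1 + 2*\<alpha>) * ln N / (Q * n)\<^sup>2"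
    using n0 by (simp add: power_mult_distrib)
  also have "\<dots> \<le> n\<^sup>2 * j powr (1 + 2*\<alpha>) * ln N / (j powr a + n)\<^sup>2"
  proof (rule divide_left_mono[OF den num])
    have "Q > 0" unfolding Q_def by (simp add: add_pos_pos)
    moreover have "0 < j powr a + n" using n0 by (intro add_nonneg_pos) auto
    ultimately show "0 < (Q * n)\<^sup>2 * (j powr a + n)\<^sup>2" using n0 by (intro mult_pos_pos zero_less_power) auto
  qed
  also have "\<dots> \<le> weight p n \<alpha> j"
    unfolding weight_def a_def using N by (intro divide_right_mono mult_left_mono) auto
  finally show ?thesis unfolding Q_def .
qed

lemma coefficient_weight_ge_window:
  fixes N j n \<alpha> \<gamma> p a\<^sub>1 c m :: real
  assumes N: "N \<ge> 1" "N \<le> j" "j \<le> 4*N" and n: "N powr (1 + 2*\<alpha> + 2*p) = n"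
    and a\<^sub>1: "1 + 2*\<alpha> + 2*p \<le> a\<^sub>1" and \<alpha>: "\<alpha> > 0" "\<gamma> \<le> \<alpha>" and p: "p \<ge> 0"
    and m: "c * j powr (-\<gamma> - 1/2) \<le> m" and c: "c > 0"
  shows "c\<^sup>2 * N powr (2*\<alpha> - 2*\<gamma>) * ln N / (4 powr a\<^sub>1 + 1)\<^sup>2 \<le> m\<^sup>2 * weight p n \<alpha> j"
proof -
  have j: "j \<ge> 1" using N by simp
  have "c\<^sup>2 * N powr (2*\<alpha> - 2*\<gamma>) \<le> c\<^sup>2 * j powr (2*\<alpha> - 2*\<gamma>)"
    using N \<alpha> by (intro mult_left_mono powr_mono2) auto
  also have "\<dots> = (c * j powr (-\<gamma> - 1/2))\<^sup>2 * j powr (1 + 2*\<alpha>)"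
    using j by (simp add: power_mult_distrib powr_power flip: powr_add)
  also have "\<dots> \<le> m\<^sup>2 * j powr (1 + 2*\<alpha>)"
    using m c by (intro mult_right_mono power_mono) auto
  finally have coef: "c\<^sup>2 * N powr (2*\<alpha> - 2*\<gamma>) \<le> m\<^sup>2 * j powr (1 + 2*\<alpha>)" .
  have "c\<^sup>2 * N powr (2*\<alpha> - 2*\<gamma>) * ln N / (4 powr a\<^sub>1 + 1)\<^sup>2
      = (c\<^sup>2 * N powr (2*\<alpha> - 2*\<gamma>)) * (ln N / (4 powr a\<^sub>1 + 1)\<^sup>2)" by simp
  also have "\<dots> \<le> (m\<^sup>2 * j powr (1 + 2*\<alpha>)) * (ln N / (4 powr a\<^sub>1 + 1)\<^sup>2)"
    using coef N by (intro mult_right_mono) auto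
  also have "\<dots> = m\<^sup>2 * (j powr (1 + 2*\<alpha>) * ln N / (4 powr a\<^sub>1 + 1)\<^sup>2)" by simp
  also have "\<dots> \<le> m\<^sup>2 * weight p n \<alpha> j"
    using weight_ge_window[OF N n a\<^sub>1 \<alpha>(1) p] by (intro mult_left_mono) auto
  finally show ?thesis by simp
qed

lemma coefficient_weight_sum_ge_window:
  fixes N :: real and n :: nat
  assumes N: "N \<ge> 1" and n: "N powr (1 + 2*\<alpha> + 2*p) = real n"
    and a\<^sub>1: "1 + 2*\<alpha> + 2*p \<le> a\<^sub>1" and \<alpha>: "\<alpha> > 0" "\<gamma> \<le> \<alpha>" and p: "p \<ge> 0" and c: "c > 0"
    and lower: "\<And>i. i \<ge> 1 \<Longrightarrow> c * real i powr (-\<gamma> - 1/2) \<le> \<mu> i"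
  defines "m \<equiv> nat \<lceil>N\<rceil>"
  shows "N * (c\<^sup>2 * N powr (2*\<alpha> - 2*\<gamma>) * ln N / (4 powr a\<^sub>1 + 1)\<^sup>2)
    \<le> (\<Sum>i\<in>{m..<2*m}. (\<mu> (Suc i))\<^sup>2 * weight p n \<alpha> (Suc i))"
proof -
  define B where "B = c\<^sup>2 * N powr (2*\<alpha> - 2*\<gamma>) * ln N / (4 powr a\<^sub>1 + 1)\<^sup>2"
  have m: "N \<le> real m" "real m \<le> N + 1" unfolding m_def using N by linarith+
  have "B \<le> (\<mu> (Suc i))\<^sup>2 * weight p n \<alpha> (Suc i)" if i: "i \<in> {m..<2*m}" for i
    unfolding B_def
  proof (rule coefficient_weight_ge_window[OF N _ _ n a\<^sub>1 \<alpha> p _ c])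
    show "N \<le> real (Suc i)" using i m by simp
    have "Suc i \<le> 2 * m" using i by simp
    then have "real (Suc i) \<le> 2 * real m" by (metis of_nat_mono of_nat_mult of_nat_numeral)
    then show "real (Suc i) \<le> 4 * N" using m N by linarith
    show "c * real (Suc i) powr (-\<gamma> - 1/2) \<le> \<mu> (Suc i)" using lower[of "Suc i"] by simp
  qed
  then have "real m * B \<le> (\<Sum>i\<in>{m..<2*m}. (\<mu> (Suc i))\<^sup>2 * weight p n \<alpha> (Suc i))"
    using sum_bounded_below[of "{m..<2*m}" B] by simp
  moreover have "B \<ge> 0" unfolding B_def using N by simp
  ultimately show ?thesis unfolding B_def[symmetric] using mult_right_mono[OF m(1)] by (meson order_trans)
qed

lemma weight_and_scale_at_balance:
  fixes n :: nat and j :: real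
  assumes n: "n \<ge> 2" and j: "j > 1" and a: "1 + 2*\<alpha> + 2*p = ln (real n) / ln j"
  shows "weight p n \<alpha> j = real n * ln j / (4 * j powr (2*p))"
    and "hfun_scale p n \<alpha> = 1 / (j * ln j)"
proof -
  have lj: "ln j > 0" using j by simp
  have x: "ln (real n) > 0" using n by simp
  have "j powr (1 + 2*\<alpha> + 2*p) = real n"
    unfolding a using j n lj by (simp add: powr_def)
  then have "j powr (1 + 2*\<alpha>) = real n / j powr (2*p)"
    using powr_diff[of j "1 + 2*\<alpha> + 2*p" "2*p"] by simp
  then show "weight p n \<alpha> j = real n * ln j / (4 * j powr (2*p))"
    unfolding weight_def \<open>j powr (1 + 2*\<alpha> + 2*p) = real n\<close> using n j by (simp add: field_simps power2_eq_square)
  have "real n powr (1 / (1 + 2*\<alpha> + 2*p)) = j"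
    unfolding a using j n lj x by (simp add: powr_def)
  then show "hfun_scale p n \<alpha> = 1 / (j * ln j)"
    unfolding hfun_scale_def \<open>real n powr (1 / (1 + 2*\<alpha> + 2*p)) = j\<close> a using lj x by (simp add: field_simps)
qed

section \<open>Bounds on \<open>h\<^sub>n\<close> and the thresholds\<close>

lemma alpha_lower_ge:
  assumes "A \<le> sqrt (ln (real n))" and "\<And>\<alpha>. 0 < \<alpha> \<Longrightarrow> \<alpha> \<le> A \<Longrightarrow> hfun p \<kappa> \<mu> n \<alpha> \<le> l"
  shows "ereal A \<le> alpha_lower p \<kappa> l \<mu> n"
proof -
  have "ereal A \<le> Inf {ereal \<alpha> | \<alpha>. \<alpha> > 0 \<and> hfun p \<kappa> \<mu> n \<alpha> > l}"
    using assms(2) by (force intro: Inf_greatest)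
  then show ?thesis unfolding alpha_lower_def using assms(1) by simp
qed

lemma alpha_upper_le:
  assumes "\<alpha> > 0" and "hfun p \<kappa> \<mu> n \<alpha> > L * (ln (real n))\<^sup>2"
  shows "alpha_upper p \<kappa> L \<mu> n \<le> ereal \<alpha>"
  unfolding alpha_upper_def using assms by (intro Inf_lower) auto

locale kappa_comparable =
  fixes p C :: real and \<kappa> :: "nat \<Rightarrow> real"
  assumes p_nonneg: "p \<ge> 0" and C_ge_1: "C \<ge> 1"
    and kappa_bounds: "\<And>i. i \<ge> 1 \<Longrightarrow> real i powr (-p) / C \<le> \<kappa> i \<and> \<kappa> i \<le> C * real i powr (-p)"
begin

lemma hfun_term_bounds:
  assumes "n \<ge> 1"
  shows "(\<mu> (Suc i))\<^sup>2 * weight p n \<alpha> (Suc i) / C^4 \<le> hfun_term \<kappa> \<mu> n \<alpha> i"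
    and "hfun_term \<kappa> \<mu> n \<alpha> i \<le> C^4 * ((\<mu> (Suc i))\<^sup>2 * weight p n \<alpha> (Suc i))"
proof -
  define j where "j = real (Suc i)"
  define X where "X = (real n)\<^sup>2 * j powr (1 + 2*\<alpha>) * (\<mu> (Suc i))\<^sup>2 * ln j"
  define D where "D = j powr (1 + 2*\<alpha> + 2*p) + real n"
  define E where "E = j powr (1 + 2*\<alpha>) / (\<kappa> (Suc i))\<^sup>2 + real n"
  have j: "j \<ge> 1" unfolding j_def by simp
  have k: "j powr (-p) / C \<le> \<kappa> (Suc i)" "\<kappa> (Suc i) \<le> C * j powr (-p)"
    using kappa_bounds[of "Suc i"] unfolding j_def by auto
  note bnd = powr_divide_square_bounds[OF j C_ge_1 k, of "1 + 2*\<alpha>"]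
  have C2: "C\<^sup>2 \<ge> 1" using C_ge_1 by (simp add: one_le_power)
  have "real n / C\<^sup>2 \<le> real n" using C2 assms by (simp add: divide_le_eq mult_le_cancel_left1)
  then have "D / C\<^sup>2 \<le> E" using bnd(1) unfolding D_def E_def by (simp add: add_divide_distrib)
  have "real n \<le> C\<^sup>2 * real n" using mult_right_mono[OF C2, of "real n"] by simp
  then have "E \<le> C\<^sup>2 * D" using bnd(2) unfolding D_def E_def by (simp add: distrib_left)
  have X: "X \<ge> 0" unfolding X_def using j by simp
  have D: "D > 0" unfolding D_def using assms by (simp add: add_nonneg_pos)
  have summand: "hfun_term \<kappa> \<mu> n \<alpha> i = X / E\<^sup>2" and wt: "(\<mu> (Suc i))\<^sup>2 * weight p n \<alpha> (Suc i) = X / D\<^sup>2"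
    unfolding hfun_term_def weight_def X_def D_def E_def j_def by simp_all
  show "(\<mu> (Suc i))\<^sup>2 * weight p n \<alpha> (Suc i) / C^4 \<le> hfun_term \<kappa> \<mu> n \<alpha> i"
    using divide_square_bounds(1)[OF X D C2 \<open>D / C\<^sup>2 \<le> E\<close> \<open>E \<le> C\<^sup>2 * D\<close>]
    unfolding summand wt by simp
  show "hfun_term \<kappa> \<mu> n \<alpha> i \<le> C^4 * ((\<mu> (Suc i))\<^sup>2 * weight p n \<alpha> (Suc i))"
    using divide_square_bounds(2)[OF X D C2 \<open>D / C\<^sup>2 \<le> E\<close> \<open>E \<le> C\<^sup>2 * D\<close>]
    unfolding summand wt by simp
qed

lemma hfun_term_summable:
  assumes "n \<ge> 1" and "\<alpha> > 0" and "in_l2 \<mu>"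
  shows "summable (hfun_term \<kappa> \<mu> n \<alpha>)"
proof (rule summable_comparison_test')
  show "summable (\<lambda>i. C^4 * (real n)\<^sup>2 * (\<mu> (Suc i))\<^sup>2)"
    using assms(3) unfolding in_l2_def by (intro summable_mult)
  fix i
  have "hfun_term \<kappa> \<mu> n \<alpha> i \<le> C^4 * ((\<mu> (Suc i))\<^sup>2 * weight p n \<alpha> (Suc i))"
    using assms(1) by (rule hfun_term_bounds)
  also have "\<dots> \<le> C^4 * ((\<mu> (Suc i))\<^sup>2 * (real n)\<^sup>2)"
    using weight_le_square[of "real (Suc i)" "real n" \<alpha> p] assms p_nonneg
    by (intro mult_left_mono) auto
  finally show "norm (hfun_term \<kappa> \<mu> n \<alpha> i) \<le> C^4 * (real n)\<^sup>2 * (\<mu> (Suc i))\<^sup>2"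
    using hfun_term_nonneg[of \<kappa> \<mu> n \<alpha> i] by (simp add: mult_ac)
qed

lemma hfun_series_le_weighted_norm:
  assumes "n \<ge> 1" and "summable w" and "sqrt (suminf w) \<le> R" and "M \<ge> 0"
    and "\<And>i. (\<mu> (Suc i))\<^sup>2 * weight p n \<alpha> (Suc i) \<le> M * w i"
  shows "(\<Sum>i. hfun_term \<kappa> \<mu> n \<alpha> i) \<le> C^4 * M * R\<^sup>2"
proof (rule suminf_le_weighted_norm[OF assms(2) hfun_term_nonneg _ _ assms(3)])
  fix i
  have "hfun_term \<kappa> \<mu> n \<alpha> i \<le> C^4 * ((\<mu> (Suc i))\<^sup>2 * weight p n \<alpha> (Suc i))"
    using assms(1) by (rule hfun_term_bounds)
  also have "\<dots> \<le> C^4 * (M * w i)"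
    using assms(5) by (intro mult_left_mono) auto
  finally show "hfun_term \<kappa> \<mu> n \<alpha> i \<le> C^4 * M * w i" by (simp add: mult.assoc)
  show "C^4 * M \<ge> 0" using assms(4) by simp
qed

lemma hfun_ge_partial_sum:
  assumes "n \<ge> 2" and "\<alpha> > 0" and "in_l2 \<mu>" and "finite I"
  shows "hfun_scale p n \<alpha> * ((\<Sum>i\<in>I. (\<mu> (Suc i))\<^sup>2 * weight p n \<alpha> (Suc i)) / C^4) \<le> hfun p \<kappa> \<mu> n \<alpha>"
proof -
  have "(\<Sum>i\<in>I. (\<mu> (Suc i))\<^sup>2 * weight p n \<alpha> (Suc i)) / C^4 \<le> (\<Sum>i\<in>I. hfun_term \<kappa> \<mu> n \<alpha> i)"
    unfolding sum_divide_distrib using assms(1) by (intro sum_mono hfun_term_bounds(1)) auto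
  also have "\<dots> \<le> (\<Sum>i. hfun_term \<kappa> \<mu> n \<alpha> i)"
    using assms by (intro sum_le_suminf hfun_term_summable hfun_term_nonneg) auto
  finally have "(\<Sum>i\<in>I. (\<mu> (Suc i))\<^sup>2 * weight p n \<alpha> (Suc i)) / C^4 \<le> (\<Sum>i. hfun_term \<kappa> \<mu> n \<alpha> i)" .
  moreover have "hfun_scale p n \<alpha> \<ge> 0" using assms p_nonneg by (intro hfun_scale_nonneg) auto
  ultimately show ?thesis unfolding hfun_eq by (rule mult_left_mono)
qed

lemma hfun_le_sobolev:
  assumes n: "n \<ge> 2" and \<alpha>: "\<alpha> > 0" and \<beta>: "\<beta> > 0"
    and fin: "sobolev_finite \<beta> \<mu>" and norm: "sobolev_norm \<beta> \<mu> \<le> R"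
    and c0: "c0 > 0" and \<alpha>_le: "\<alpha> \<le> \<beta> - c0 / ln (real n)"
    and n_large: "ln (real n) \<ge> 1 + 2*\<beta> + 2*p"
  shows "hfun p \<kappa> \<mu> n \<alpha> \<le> 2 * C^4 * R\<^sup>2 *
    (exp (-2*c0 / (1 + 2*\<beta> + 2*p)) + exp (- ln (real n) / (1 + 2*\<beta> + 2*p)))"
proof -
  define N where "N = real n powr (1 / (1 + 2*\<alpha> + 2*p))"
  define M where "M = (N powr (1 + 2*\<alpha> - 2*\<beta>) + 1) * (ln N + 1)"
  have N1: "N \<ge> 1" unfolding N_def using n \<alpha> p_nonneg by (simp add: ge_one_powr_ge_zero)
  have M0: "M \<ge> 0" unfolding M_def using N1 by simp
  have "(\<Sum>i. hfun_term \<kappa> \<mu> n \<alpha> i) \<le> C^4 * M * R\<^sup>2"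
  proof (rule hfun_series_le_weighted_norm[OF _ _ _ M0])
    show "summable (\<lambda>i. real (Suc i) powr (2*\<beta>) * (\<mu> (Suc i))\<^sup>2)"
      using fin unfolding sobolev_finite_def .
    show "sqrt (\<Sum>i. real (Suc i) powr (2*\<beta>) * (\<mu> (Suc i))\<^sup>2) \<le> R"
      using norm unfolding sobolev_norm_def .
    fix i
    have wi: "weight p n \<alpha> (Suc i) \<le> real (Suc i) powr (2*\<beta>) * M"
      unfolding M_def N_def using n \<alpha> \<beta> p_nonneg by (intro weight_le_sobolev) auto
    show "(\<mu> (Suc i))\<^sup>2 * weight p n \<alpha> (Suc i) \<le> M * (real (Suc i) powr (2*\<beta>) * (\<mu> (Suc i))\<^sup>2)"
      using mult_left_mono[OF wi, of "(\<mu> (Suc i))\<^sup>2"] by (simp add: ac_simps)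
  qed (use n in auto)
  then have "hfun p \<kappa> \<mu> n \<alpha> \<le> hfun_scale p n \<alpha> * (C^4 * M * R\<^sup>2)"
    unfolding hfun_eq using hfun_scale_nonneg[OF \<alpha> p_nonneg, of n] n by (intro mult_left_mono) auto
  also have "\<dots> = C^4 * R\<^sup>2 * (hfun_scale p n \<alpha> * M)" by (simp add: ac_simps)
  also have "\<dots> \<le> C^4 * R\<^sup>2 * (2 * (exp (-2*c0 / (1 + 2*\<beta> + 2*p)) + exp (- ln (real n) / (1 + 2*\<beta> + 2*p))))"
    unfolding M_def N_def
    by (intro mult_left_mono hfun_scale_times_sobolev_factor_le n \<alpha> p_nonneg c0 \<alpha>_le n_large) auto
  finally show ?thesis by (simp add: algebra_simps)
qed

lemma alpha_lower_sobolev: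
  assumes \<beta>: "\<beta> > 0" and R: "R > 0" and l: "l > 0"
  shows "\<exists>c0 > 0. \<forall>\<^sub>F n in sequentially. \<forall>\<mu>. in_l2 \<mu> \<and> sobolev_finite \<beta> \<mu> \<and> sobolev_norm \<beta> \<mu> \<le> R \<longrightarrow>
           alpha_lower p \<kappa> l \<mu> n \<ge> ereal (\<beta> - c0 / ln (real n))"
proof -
  define K a\<^sub>\<beta> where "K = 2 * C^4 * R\<^sup>2" and "a\<^sub>\<beta> = 1 + 2*\<beta> + 2*p"
  define c0 where "c0 = a\<^sub>\<beta> / 2 * ln (2*K/l + 1)"
  have K: "K > 0" unfolding K_def using C_ge_1 R by simp
  have a\<^sub>\<beta>: "a\<^sub>\<beta> > 0" unfolding a\<^sub>\<beta>_def using \<beta> p_nonneg by simp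
  have "ln (2*K/l + 1) > 0" using K l by (intro ln_gt_zero) (simp add: add_pos_nonneg)
  then have c0: "c0 > 0" unfolding c0_def using a\<^sub>\<beta> by simp
  \<comment> \<open>\<open>c0\<close> makes the first term of the bound of \<open>hfun_le_sobolev\<close> at most \<open>l/2\<close>; the second one tends to \<open>0\<close>\<close>
  have "K * exp (-2*c0 / a\<^sub>\<beta>) = K / (2*K/l + 1)"
    unfolding c0_def using a\<^sub>\<beta> K l by (simp add: exp_minus field_simps)
  also have "\<dots> < l / 2" using K l by (simp add: field_simps)
  finally have low: "K * exp (-2*c0 / a\<^sub>\<beta>) < l / 2" .
  have "\<forall>\<^sub>F n in sequentially. n \<ge> 2 \<and> ln (real n) \<ge> a\<^sub>\<beta> \<and> K * exp (- ln (real n) / a\<^sub>\<beta>) < l / 2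
      \<and> sqrt (ln (real n)) \<ge> \<beta>"
    using a\<^sub>\<beta> K l by (intro eventually_conj eventually_ge_at_top) real_asymp+
  then show ?thesis
  proof (intro exI[of _ c0] conjI c0, eventually_elim, intro allI impI)
    fix n \<mu>
    assume n: "n \<ge> 2 \<and> ln (real n) \<ge> a\<^sub>\<beta> \<and> K * exp (- ln (real n) / a\<^sub>\<beta>) < l / 2 \<and> sqrt (ln (real n)) \<ge> \<beta>"
      and \<mu>: "in_l2 \<mu> \<and> sobolev_finite \<beta> \<mu> \<and> sobolev_norm \<beta> \<mu> \<le> R"
    show "ereal (\<beta> - c0 / ln (real n)) \<le> alpha_lower p \<kappa> l \<mu> n"
    proof (rule alpha_lower_ge)
      have "c0 / ln (real n) \<ge> 0" using n c0 by simp
      then show "\<beta> - c0 / ln (real n) \<le> sqrt (ln (real n))" using n by linarith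
      fix \<alpha> assume "0 < \<alpha>" "\<alpha> \<le> \<beta> - c0 / ln (real n)"
      then have "hfun p \<kappa> \<mu> n \<alpha> \<le> K * (exp (-2*c0 / a\<^sub>\<beta>) + exp (- ln (real n) / a\<^sub>\<beta>))"
        using n \<mu> \<beta> c0 unfolding K_def a\<^sub>\<beta>_def by (intro hfun_le_sobolev) auto
      then show "hfun p \<kappa> \<mu> n \<alpha> \<le> l" using n low by (simp add: distrib_left)
    qed
  qed
qed

lemma hfun_le_analytic:
  assumes n: "n \<ge> 2" and \<alpha>: "0 < \<alpha>" "\<alpha> \<le> A" and \<gamma>: "\<gamma> > 0"
    and fin: "analytic_finite \<gamma> \<mu>" and norm: "analytic_norm \<gamma> \<mu> \<le> R"
  shows "hfun p \<kappa> \<mu> n \<alpha> \<le> hfun_scale p n A * (C^4 * ((2+2*A) * (1 + 1/(2*\<gamma>))) powr (2+2*A) * R\<^sup>2)"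
proof -
  define K where "K = 1 + 1/(2*\<gamma>)"
  have K: "K \<ge> 1" unfolding K_def using \<gamma> by simp
  have "((2+2*\<alpha>) * K) powr (2+2*\<alpha>) \<le> ((2+2*A) * K) powr (2+2*\<alpha>)"
    using \<alpha> K by (intro powr_mono2 mult_right_mono) auto
  also have "\<dots> \<le> ((2+2*A) * K) powr (2+2*A)"
    using \<alpha> K mult_mono[of 1 "2+2*A" 1 K] by (intro powr_mono) auto
  finally have M: "((2+2*\<alpha>) * K) powr (2+2*\<alpha>) \<le> ((2+2*A) * K) powr (2+2*A)" .
  have "(\<Sum>i. hfun_term \<kappa> \<mu> n \<alpha> i) \<le> C^4 * ((2+2*A) * K) powr (2+2*A) * R\<^sup>2"
  proof (rule hfun_series_le_weighted_norm)
    show "summable (\<lambda>i. exp (2*\<gamma>*real (Suc i)) * (\<mu> (Suc i))\<^sup>2)"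
      using fin unfolding analytic_finite_def .
    show "sqrt (\<Sum>i. exp (2*\<gamma>*real (Suc i)) * (\<mu> (Suc i))\<^sup>2) \<le> R"
      using norm unfolding analytic_norm_def .
    fix i
    have "weight p n \<alpha> (Suc i) \<le> ((2+2*\<alpha>) * K) powr (2+2*\<alpha>) * exp (2*\<gamma>*real (Suc i))"
      unfolding K_def using \<alpha> \<gamma> by (intro weight_le_analytic) auto
    also have "\<dots> \<le> ((2+2*A) * K) powr (2+2*A) * exp (2*\<gamma>*real (Suc i))"
      using M by (rule mult_right_mono) simp
    finally have wi: "weight p n \<alpha> (Suc i) \<le> ((2+2*A) * K) powr (2+2*A) * exp (2*\<gamma>*real (Suc i))" .
    show "(\<mu> (Suc i))\<^sup>2 * weight p n \<alpha> (Suc i)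
        \<le> ((2+2*A) * K) powr (2+2*A) * (exp (2*\<gamma>*real (Suc i)) * (\<mu> (Suc i))\<^sup>2)"
      using mult_left_mono[OF wi, of "(\<mu> (Suc i))\<^sup>2"] by (simp add: ac_simps)
  qed (use n in auto)
  moreover have "0 \<le> hfun_scale p n \<alpha>" "hfun_scale p n \<alpha> \<le> hfun_scale p n A"
    using n \<alpha> p_nonneg by (auto intro: hfun_scale_nonneg hfun_scale_mono)
  moreover have "0 \<le> C^4 * ((2+2*A) * K) powr (2+2*A) * R\<^sup>2" by simp
  ultimately show ?thesis
    unfolding hfun_eq K_def by (meson mult_left_mono mult_right_mono order_trans)
qed

lemma alpha_lower_analytic:
  assumes \<gamma>: "\<gamma> > 0" and R: "R > 0" and l: "l > 0"
  shows "\<forall>\<^sub>F n in sequentially. \<forall>\<mu>. in_l2 \<mu> \<and> analytic_finite \<gamma> \<mu> \<and> analytic_norm \<gamma> \<mu> \<le> R \<longrightarrow>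
           alpha_lower p \<kappa> l \<mu> n \<ge> ereal (sqrt (ln (real n)) / ln (ln (real n)))"
proof -
  define A where "A n = sqrt (ln (real n)) / ln (ln (real n))" for n :: nat
  define K where "K = 1 + 1/(2*\<gamma>)"
  have K: "K \<ge> 1" unfolding K_def using \<gamma> by simp
  have "\<forall>\<^sub>F n in sequentially. n \<ge> 2 \<and> ln (ln (real n)) \<ge> 1 \<and>
      hfun_scale p n (A n) * (C^4 * ((2+2*A n) * K) powr (2+2*A n) * R\<^sup>2) < l"
    unfolding hfun_scale_def A_def using p_nonneg C_ge_1 K R l
    by (intro eventually_conj eventually_ge_at_top) real_asymp+
  then show ?thesis
  proof (eventually_elim, intro allI impI)
    fix n \<mu>
    assume n: "n \<ge> 2 \<and> ln (ln (real n)) \<ge> 1 \<and>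
        hfun_scale p n (A n) * (C^4 * ((2+2*A n) * K) powr (2+2*A n) * R\<^sup>2) < l"
      and \<mu>: "in_l2 \<mu> \<and> analytic_finite \<gamma> \<mu> \<and> analytic_norm \<gamma> \<mu> \<le> R"
    have "0 < ln (ln (real n)) * 1" using n by linarith
    moreover have "0 \<le> sqrt (ln (real n))" using n by simp
    ultimately have "A n \<le> sqrt (ln (real n)) / 1"
      unfolding A_def using n by (intro divide_left_mono) auto
    then have "A n \<le> sqrt (ln (real n))" by simp
    then show "ereal (sqrt (ln (real n)) / ln (ln (real n))) \<le> alpha_lower p \<kappa> l \<mu> n"
      unfolding A_def[symmetric]
    proof (rule alpha_lower_ge)
      fix \<alpha> assume "0 < \<alpha>" "\<alpha> \<le> A n"
      then have "hfun p \<kappa> \<mu> n \<alpha> \<le> hfun_scale p n (A n) * (C^4 * ((2+2*A n) * K) powr (2+2*A n) * R\<^sup>2)"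
        unfolding K_def using n \<mu> \<gamma> by (intro hfun_le_analytic) auto
      then show "hfun p \<kappa> \<mu> n \<alpha> \<le> l" using n by simp
    qed
  qed
qed

lemma hfun_ge_polynomial:
  assumes n: "n \<ge> 2" and \<alpha>: "\<alpha> > 0" "\<gamma> \<le> \<alpha>" and c: "c > 0" and \<mu>: "in_l2 \<mu>"
    and lower: "\<And>i. i \<ge> 1 \<Longrightarrow> c * real i powr (-\<gamma> - 1/2) \<le> \<mu> i"
    and a\<^sub>1: "1 + 2*\<alpha> + 2*p \<le> a\<^sub>1"
  shows "c\<^sup>2 * real n powr ((2*\<alpha> - 2*\<gamma>) / (1 + 2*\<alpha> + 2*p)) / ((4 powr a\<^sub>1 + 1)\<^sup>2 * C^4)
    \<le> hfun p \<kappa> \<mu> n \<alpha>"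
proof -
  define a x where "a = 1 + 2*\<alpha> + 2*p" and "x = ln (real n)"
  define N where "N = real n powr (1/a)"
  define I where "I = {nat \<lceil>N\<rceil>..<2 * nat \<lceil>N\<rceil>}"
  have a0: "a > 0" unfolding a_def using \<alpha> p_nonneg by simp
  have x0: "x > 0" unfolding x_def using n by simp
  have N1: "N \<ge> 1" unfolding N_def using n a0 by (simp add: ge_one_powr_ge_zero)
  have Na: "N powr a = real n" unfolding N_def using n a0 by (simp add: powr_powr)
  have lnN: "ln N = x / a" unfolding N_def x_def using n by (simp add: ln_powr)
  have "N * (c\<^sup>2 * N powr (2*\<alpha> - 2*\<gamma>) * ln N / (4 powr a\<^sub>1 + 1)\<^sup>2) / C^4
      \<le> (\<Sum>i\<in>I. (\<mu> (Suc i))\<^sup>2 * weight p n \<alpha> (Suc i)) / C^4"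
    unfolding I_def using coefficient_weight_sum_ge_window[OF N1 Na[unfolded a_def] a\<^sub>1 \<alpha> p_nonneg c lower]
    by (intro divide_right_mono) auto
  then have "hfun_scale p n \<alpha> * (N * (c\<^sup>2 * N powr (2*\<alpha> - 2*\<gamma>) * ln N / (4 powr a\<^sub>1 + 1)\<^sup>2) / C^4)
      \<le> hfun_scale p n \<alpha> * ((\<Sum>i\<in>I. (\<mu> (Suc i))\<^sup>2 * weight p n \<alpha> (Suc i)) / C^4)"
    using hfun_scale_nonneg[OF \<alpha>(1) p_nonneg, of n] n by (intro mult_left_mono) auto
  also have "\<dots> \<le> hfun p \<kappa> \<mu> n \<alpha>" unfolding I_def by (rule hfun_ge_partial_sum[OF n \<alpha>(1) \<mu>]) simp
  also have "hfun_scale p n \<alpha> * (N * (c\<^sup>2 * N powr (2*\<alpha> - 2*\<gamma>) * ln N / (4 powr a\<^sub>1 + 1)\<^sup>2) / C^4)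
      = c\<^sup>2 * N powr (2*\<alpha> - 2*\<gamma>) / ((4 powr a\<^sub>1 + 1)\<^sup>2 * C^4)"
    unfolding hfun_scale_def a_def[symmetric] N_def[symmetric] x_def[symmetric] lnN
    using a0 x0 N1 C_ge_1 by (simp add: field_simps add_pos_pos)
  also have "N powr (2*\<alpha> - 2*\<gamma>) = real n powr ((2*\<alpha> - 2*\<gamma>) / a)"
    unfolding N_def by (simp add: powr_powr)
  finally show ?thesis unfolding a_def .
qed

lemma hfun_ge_log_power:
  assumes n: "n \<ge> 2" and c: "c > 0" and \<gamma>: "\<gamma> > 0" and \<mu>: "in_l2 \<mu>"
    and lower: "\<And>i. i \<ge> 1 \<Longrightarrow> c * real i powr (-\<gamma> - 1/2) \<le> \<mu> i"
    and x: "ln (real n) \<ge> 1" and shift: "2 * a\<^sub>1 * ln (ln (real n)) / ln (real n) \<le> 1"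
    and a\<^sub>1: "a\<^sub>1 = 2*\<gamma> + 3 + 2*p"
  shows "c\<^sup>2 * (ln (real n))^4 / ((4 powr a\<^sub>1 + 1)\<^sup>2 * C^4)
    \<le> hfun p \<kappa> \<mu> n (\<gamma> + 2 * a\<^sub>1 * ln (ln (real n)) / ln (real n))"
proof -
  define x where "x = ln (real n)"
  define t where "t = 2 * a\<^sub>1 * ln x / x"
  define \<alpha> where "\<alpha> = \<gamma> + t"
  have a\<^sub>10: "a\<^sub>1 > 0" unfolding a\<^sub>1 using \<gamma> p_nonneg by simp
  have t: "0 \<le> t" "t \<le> 1" unfolding t_def x_def using a\<^sub>10 x shift by simp_all
  have \<alpha>: "\<alpha> > 0" "\<gamma> \<le> \<alpha>" unfolding \<alpha>_def using t \<gamma> by auto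
  have a_le: "1 + 2*\<alpha> + 2*p \<le> a\<^sub>1" unfolding \<alpha>_def using t a\<^sub>1 by simp
  have a0: "1 + 2*\<alpha> + 2*p > 0" using \<alpha> p_nonneg by simp
  \<comment> \<open>the shift of \<open>\<alpha>\<close> above \<open>\<gamma>\<close> turns the power of \<open>n\<close> into a power of \<open>log n\<close>\<close>
  have "(2*\<alpha> - 2*\<gamma>) / (1 + 2*\<alpha> + 2*p) * x = 4 * a\<^sub>1 * ln x / (1 + 2*\<alpha> + 2*p)"
    unfolding \<alpha>_def t_def using x unfolding x_def by (simp add: field_simps)
  also have "\<dots> \<ge> 4 * a\<^sub>1 * ln x / a\<^sub>1"
    using a0 a_le a\<^sub>10 x unfolding x_def by (intro divide_left_mono mult_nonneg_nonneg) auto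
  finally have "exp (4 * ln x) \<le> exp ((2*\<alpha> - 2*\<gamma>) / (1 + 2*\<alpha> + 2*p) * x)" using a\<^sub>10 by simp
  moreover have "exp (4 * ln x) = x^4"
    using x powr_realpow[of x 4] unfolding x_def by (simp add: powr_def)
  moreover have "exp ((2*\<alpha> - 2*\<gamma>) / (1 + 2*\<alpha> + 2*p) * x) = real n powr ((2*\<alpha> - 2*\<gamma>) / (1 + 2*\<alpha> + 2*p))"
    using n unfolding x_def by (simp add: powr_def)
  ultimately have "x^4 \<le> real n powr ((2*\<alpha> - 2*\<gamma>) / (1 + 2*\<alpha> + 2*p))" by simp
  then have "c\<^sup>2 * x^4 / ((4 powr a\<^sub>1 + 1)\<^sup>2 * C^4)
      \<le> c\<^sup>2 * real n powr ((2*\<alpha> - 2*\<gamma>) / (1 + 2*\<alpha> + 2*p)) / ((4 powr a\<^sub>1 + 1)\<^sup>2 * C^4)"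
    by (intro divide_right_mono mult_left_mono) auto
  also have "\<dots> \<le> hfun p \<kappa> \<mu> n \<alpha>" by (rule hfun_ge_polynomial[OF n \<alpha> c \<mu> lower a_le])
  finally show ?thesis unfolding \<alpha>_def t_def x_def .
qed

lemma alpha_upper_polynomial:
  assumes c: "c > 0" and \<gamma>: "\<gamma> > 0" and L: "L > 0"
  shows "\<exists>C\<^sub>0 > 0. \<forall>\<mu>. in_l2 \<mu> \<and> (\<forall>i \<ge> 1. \<mu> i \<ge> c * real i powr (-\<gamma> - 1/2)) \<longrightarrow>
           (\<forall>\<^sub>F n in sequentially. alpha_upper p \<kappa> L \<mu> n \<le> ereal (\<gamma> + C\<^sub>0 * ln (ln (real n)) / ln (real n)))"
proof (intro exI[of _ "2 * (2*\<gamma> + 3 + 2*p)"] conjI allI impI)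
  define a\<^sub>1 Q where "a\<^sub>1 = 2*\<gamma> + 3 + 2*p" and "Q = (4 powr a\<^sub>1 + 1)\<^sup>2 * C^4"
  show "2 * (2*\<gamma> + 3 + 2*p) > 0" using \<gamma> p_nonneg by simp
  have "1 * 1 \<le> (4 powr a\<^sub>1 + 1)\<^sup>2 * C^4" using C_ge_1 by (intro mult_mono one_le_power) auto
  then have Q: "Q \<ge> 1" unfolding Q_def by simp
  fix \<mu> assume \<mu>: "in_l2 \<mu> \<and> (\<forall>i \<ge> 1. \<mu> i \<ge> c * real i powr (-\<gamma> - 1/2))"
  have "\<forall>\<^sub>F n in sequentially. n \<ge> 2 \<and> ln (real n) \<ge> 1 \<and> 2 * a\<^sub>1 * ln (ln (real n)) / ln (real n) \<le> 1
      \<and> c\<^sup>2 * (ln (real n))^4 / Q > L * (ln (real n))\<^sup>2"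
    using c Q L by (intro eventually_conj eventually_ge_at_top) real_asymp+
  then show "\<forall>\<^sub>F n in sequentially. alpha_upper p \<kappa> L \<mu> n
      \<le> ereal (\<gamma> + 2 * (2*\<gamma> + 3 + 2*p) * ln (ln (real n)) / ln (real n))"
  proof eventually_elim
    case (elim n)
    have "L * (ln (real n))\<^sup>2 < hfun p \<kappa> \<mu> n (\<gamma> + 2 * a\<^sub>1 * ln (ln (real n)) / ln (real n))"
      using elim hfun_ge_log_power[OF _ c \<gamma>, of n \<mu> a\<^sub>1] \<mu> unfolding Q_def a\<^sub>1_def by fastforce
    moreover have "\<gamma> + 2 * a\<^sub>1 * ln (ln (real n)) / ln (real n) > 0"
      using elim \<gamma> p_nonneg unfolding a\<^sub>1_def by (simp add: add_pos_nonneg)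
    ultimately show ?case unfolding a\<^sub>1_def by (intro alpha_upper_le) auto
  qed
qed

lemma hfun_ge_single_coefficient:
  assumes n: "n \<ge> 2" and j: "j \<ge> 2" and \<mu>: "in_l2 \<mu>" and \<alpha>: "\<alpha> > 0"
    and a: "1 + 2*\<alpha> + 2*p = ln (real n) / ln (real j)"
  shows "real n * (\<mu> j)\<^sup>2 / (4 * C^4 * real j powr (1 + 2*p)) \<le> hfun p \<kappa> \<mu> n \<alpha>"
proof -
  have j1: "real j > 1" using j by simp
  obtain k where k: "j = Suc k" using j by (cases j) auto
  have lj: "ln (real j) > 0" using j1 by simp
  have "real n * (\<mu> j)\<^sup>2 / (4 * C^4 * real j powr (1 + 2*p))
      = 1 / (real j * ln (real j)) * ((\<mu> j)\<^sup>2 * (real n * ln (real j) / (4 * real j powr (2*p))) / C^4)"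
    using lj j1 C_ge_1 by (simp add: powr_add field_simps)
  also have "\<dots> = hfun_scale p n \<alpha> * ((\<Sum>i\<in>{k}. (\<mu> (Suc i))\<^sup>2 * weight p n \<alpha> (Suc i)) / C^4)"
  proof -
    have "(\<Sum>i\<in>{k}. (\<mu> (Suc i))\<^sup>2 * weight p n \<alpha> (Suc i)) = (\<mu> j)\<^sup>2 * weight p n \<alpha> (real j)"
      unfolding k by simp
    then show ?thesis unfolding weight_and_scale_at_balance[OF n j1 a] by simp
  qed
  also have "\<dots> \<le> hfun p \<kappa> \<mu> n \<alpha>" by (rule hfun_ge_partial_sum[OF n \<alpha> \<mu>]) simp
  finally show ?thesis .
qed

lemma alpha_upper_nonzero_coefficient:
  assumes L: "L > 0" and \<mu>: "in_l2 \<mu>" and j: "j \<ge> 2" and \<mu>j: "\<mu> j \<noteq> 0"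
  shows "\<forall>\<^sub>F n in sequentially. alpha_upper p \<kappa> L \<mu> n \<le> ereal (ln (real n) / (2 * ln 2) - 1/2 - p)"
proof -
  define D where "D = (\<mu> j)\<^sup>2 / (4 * C^4 * real j powr (1 + 2*p))"
  have D: "D > 0" unfolding D_def using \<mu>j j C_ge_1 by simp
  have lj: "ln (real j) \<ge> ln 2" using j by simp
  then have "ln (real j) > 0" using ln_gt_zero[of 2] by linarith
  then have "\<forall>\<^sub>F n in sequentially. n \<ge> 2 \<and> ln (real n) / ln (real j) > 1 + 2*p \<and> real n * D > L * (ln (real n))\<^sup>2"
    using D L by (intro eventually_conj eventually_ge_at_top) real_asymp+
  then show ?thesis
  proof eventually_elim
    case (elim n)
    \<comment> \<open>for this \<open>\<alpha>\<close> the coefficient \<open>j\<close> sits at the transition \<open>j\<^sup>1\<^sup>+\<^sup>2\<^sup>\<alpha>\<^sup>+\<^sup>2\<^sup>p = n\<close> of the weights\<close>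
    define \<alpha> where "\<alpha> = (ln (real n) / ln (real j) - 1 - 2*p) / 2"
    have \<alpha>: "\<alpha> > 0" unfolding \<alpha>_def using elim by simp
    have a: "1 + 2*\<alpha> + 2*p = ln (real n) / ln (real j)" unfolding \<alpha>_def by (simp add: field_simps)
    have "L * (ln (real n))\<^sup>2 < hfun p \<kappa> \<mu> n \<alpha>"
      using elim hfun_ge_single_coefficient[OF _ j \<mu> \<alpha> a] unfolding D_def by simp
    then have "alpha_upper p \<kappa> L \<mu> n \<le> ereal \<alpha>" using \<alpha> by (rule alpha_upper_le[rotated])
    also have "\<alpha> \<le> ln (real n) / (2 * ln 2) - 1/2 - p"
      unfolding \<alpha>_def using elim lj \<open>ln (real j) > 0\<close> by (simp add: field_simps frac_le)
    finally show ?case by simp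
  qed
qed

end

theorem lemma2p1:
  fixes p C l L :: real and \<kappa> \<mu>0 :: "nat \<Rightarrow> real"
  assumes hp: "p \<ge> 0"
    and hC: "C \<ge> 1"
    and h\<kappa>: "\<And>i. i \<ge> 1 \<Longrightarrow> real i powr (-p) / C \<le> \<kappa> i \<and> \<kappa> i \<le> C * real i powr (-p)"
    and h\<mu>0: "in_l2 \<mu>0"
    and hl: "l > 0" and hL: "L > 0"
  shows
    "(\<forall>\<beta> R. \<beta> > 0 \<longrightarrow> R > 0 \<longrightarrow>
        (\<exists>c0 > 0. \<forall>\<^sub>F n in sequentially.
           \<forall>\<mu>. in_l2 \<mu> \<and> sobolev_finite \<beta> \<mu> \<and> sobolev_norm \<beta> \<mu> \<le> R \<longrightarrow>
             alpha_lower p \<kappa> l \<mu> n \<ge> ereal (\<beta> - c0 / ln (real n))))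
   \<and> (\<forall>\<gamma> R. \<gamma> > 0 \<longrightarrow> R > 0 \<longrightarrow>
        (\<forall>\<^sub>F n in sequentially.
           \<forall>\<mu>. in_l2 \<mu> \<and> analytic_finite \<gamma> \<mu> \<and> analytic_norm \<gamma> \<mu> \<le> R \<longrightarrow>
             alpha_lower p \<kappa> l \<mu> n \<ge> ereal (sqrt (ln (real n)) / ln (ln (real n)))))
   \<and> (\<forall>c \<gamma>. c > 0 \<longrightarrow> \<gamma> > 0 \<longrightarrow>
        (\<exists>C0 > 0. \<forall>\<mu>. in_l2 \<mu> \<and> (\<forall>i \<ge> 1. \<mu> i \<ge> c * real i powr (-\<gamma> - 1/2)) \<longrightarrow>
           (\<forall>\<^sub>F n in sequentially.
              alpha_upper p \<kappa> L \<mu> n \<le> ereal (\<gamma> + C0 * ln (ln (real n)) / ln (real n)))))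
   \<and> ((\<exists>i \<ge> 2. \<mu>0 i \<noteq> 0) \<longrightarrow>
        (\<forall>\<^sub>F n in sequentially.
           alpha_upper p \<kappa> L \<mu>0 n \<le> ereal (ln (real n) / (2 * ln 2) - 1/2 - p)))"
proof -
  interpret kappa_comparable p C \<kappa> by unfold_locales (fact hp, fact hC, fact h\<kappa>)
  show ?thesis
    using alpha_lower_sobolev[OF _ _ hl] alpha_lower_analytic[OF _ _ hl]
      alpha_upper_polynomial[OF _ _ hL] alpha_upper_nonzero_coefficient[OF hL h\<mu>0]
    by blast
qed

end
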